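(* In the aggregative setting described in the context, suppose assumptions (i)–(iv) there hold, and define $L_t\triangleq\frac{\mu\max_{i}L_{gi}}{\mu^2+L_a^2}\Big(1-\frac{L_a}{\sqrt{\mu^2+L_a^2}}\Big)^{-1}$. Then for each $i\in\{1,\dots,n\}$ and every $y_i\in\mathcal{R}_i$, $$\|T_i(y_i,z_1)-T_i(y_i,z_2)\|\le L_t\|z_1-z_2\|\quad\text{for all }z_1,z_2\in\mathbb{R}^d.$$
   Context: Aggregative game: $n$ players, each chooses $x_i\in\mathbb{R}^d$; player $i$ has cost $f_i(x_i,\bar x)+r_i(x_i)$ where $\bar x=\sum_jx_j$ and $f_i(x_i,\bar x)=\mathbb{E}[\psi_i(x_i,x_i+\bar x_{-i};\xi_i)]$, $\bar x_{-i}=\sum_{j\ne i}x_j$. Assumptions, for each $i$: (i) $r_i$ is lower semicontinuous and convex with compact effective domain $\mathcal{R}_i$; (ii) for any $y\in\mathbb{R}^d$, $x_i\mapsto f_i(x_i,x_i+y)$ is twice continuously differentiable and convex on $\mathcal{R}_i$; (iii) with $g_i(x_i,y)$ denoting the gradient at $x_i$ of $x_i\mapsto f_i(x_i,x_i+y)$, there is $L_a>0$ such that for any $y\in\mathbb{R}^d$, $\|g_i(x_i,y)-g_i(x_i',y)\|\le L_a\|x_i-x_i'\|$ for $x_i,x_i'\in\mathcal{R}_i$; (iv) for any $x_i\in\mathcal{R}_i$, $\|g_i(x_i,y_1)-g_i(x_i,y_2)\|\le L_{gi}\|y_1-y_2\|$ for all $y_1,y_2\in\mathbb{R}^d$. Fix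 $\mu>0$. For $y_i\in\mathcal{R}_i$, $z\in\mathbb{R}^d$: $T_i(y_i,z)\triangleq\arg\min_{x_i\in\mathbb{R}^d}\big[f_i(x_i,x_i+z-y_i)+r_i(x_i)+\frac\mu2\|x_i-y_i\|^2\big]$ (uniquely defined). *)

theory Defs
  imports "HOL-Analysis.Analysis"
begin

definition eff_dom :: "('a \<Rightarrow> ereal) \<Rightarrow> 'a set" where
  "eff_dom r = {x. r x < \<infinity>}"

definition lsc_fun :: "('a::topological_space \<Rightarrow> ereal) \<Rightarrow> bool" where
  "lsc_fun r \<longleftrightarrow> (\<forall>c::ereal. closed {x. r x \<le> c})"

definition convex_ext :: "('a::real_vector \<Rightarrow> ereal) \<Rightarrow> bool" where
  "convex_ext r \<longleftrightarrow> (\<forall>x y. \<forall>t::real. 0 \<le> t \<and> t \<le> 1 \<longrightarrow>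
      r ((1 - t) *\<^sub>R x + t *\<^sub>R y) \<le> ereal (1 - t) * r x + ereal t * r y)"

definition best_resp ::
  "(nat \<Rightarrow> 'a::real_normed_vector \<Rightarrow> 'a \<Rightarrow> real) \<Rightarrow> (nat \<Rightarrow> 'a \<Rightarrow> ereal) \<Rightarrow> real
     \<Rightarrow> nat \<Rightarrow> 'a \<Rightarrow> 'a \<Rightarrow> 'a" where
  "best_resp f r \<mu> i y z =
     (THE x. \<forall>x'. ereal (f i x (x + z - y)) + r i x + ereal (\<mu> / 2 * (norm (x - y))\<^sup>2)
                 \<le> ereal (f i x' (x' + z - y)) + r i x' + ereal (\<mu> / 2 * (norm (x' - y))\<^sup>2))"

end

theory Submission
  imports Defs
begin

text \<open>The proximal objective \<open>x \<mapsto> f\<^sub>i(x, x + z - y) + r\<^sub>i(x) + \<mu>/2 \<parallel>x - y\<parallel>\<^sup>2\<close> is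
  \<open>\<mu>\<close>-strongly convex on the compact convex set \<open>\<R>\<^sub>i\<close>, so it has a unique minimiser
  \<open>T(z)\<close>, above which it grows at least like \<open>\<mu>/2 \<parallel>x - T(z)\<parallel>\<^sup>2\<close>. Adding this growth
  inequality at \<open>T(z\<^sub>1)\<close> and at \<open>T(z\<^sub>2)\<close> bounds \<open>\<mu> \<parallel>T(z\<^sub>1) - T(z\<^sub>2)\<parallel>\<^sup>2\<close> by an increment of
  the difference of the two smooth parts, which by (iv) and the mean value theorem is
  \<open>L\<^sub>g\<^sub>i \<parallel>z\<^sub>1 - z\<^sub>2\<parallel>\<close>-Lipschitz. Hence \<open>T\<close> is \<open>L\<^sub>g\<^sub>i/\<mu>\<close>-Lipschitz, and \<open>L\<^sub>g\<^sub>i/\<mu> \<le> L\<^sub>t\<close>.\<close>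

lemma ereal_real_of_ereal_eff_dom:
  assumes "\<And>x. R x \<noteq> -\<infinity>" and "x \<in> eff_dom R"
  shows "R x = ereal (real_of_ereal (R x))"
  using assms by (cases "R x") (auto simp: eff_dom_def)

lemma convex_eff_dom:
  assumes proper: "\<And>x. R x \<noteq> -\<infinity>" and cvx: "convex_ext R"
  shows "convex (eff_dom R)"
proof (rule convexI)
  fix a b and u v :: real
  assume a: "a \<in> eff_dom R" and b: "b \<in> eff_dom R" and "0 \<le> u" "0 \<le> v" "u + v = 1"
  then have u: "u = 1 - v" and v: "0 \<le> v" "v \<le> 1" by auto
  have "R ((1 - v) *\<^sub>R a + v *\<^sub>R b) \<le> ereal (1 - v) * R a + ereal v * R b"
    using cvx v unfolding convex_ext_def by blast
  also have "\<dots> < \<infinity>"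
    by (subst ereal_real_of_ereal_eff_dom[OF proper a], subst ereal_real_of_ereal_eff_dom[OF proper b]) simp
  finally show "u *\<^sub>R a + v *\<^sub>R b \<in> eff_dom R" by (simp add: eff_dom_def u)
qed

lemma convex_on_real_of_ereal_eff_dom:
  assumes proper: "\<And>x. R x \<noteq> -\<infinity>" and cvx: "convex_ext R"
  shows "convex_on (eff_dom R) (\<lambda>x. real_of_ereal (R x))"
proof (rule convex_onI)
  fix t :: real and a b
  assume t: "0 < t" "t < 1" and a: "a \<in> eff_dom R" and b: "b \<in> eff_dom R"
  have p: "(1 - t) *\<^sub>R a + t *\<^sub>R b \<in> eff_dom R"
    using convex_eff_dom[OF proper cvx] a b t by (simp add: convex_alt)
  note fin = ereal_real_of_ereal_eff_dom[OF proper]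
  have "R ((1 - t) *\<^sub>R a + t *\<^sub>R b) \<le> ereal (1 - t) * R a + ereal t * R b"
    using cvx t unfolding convex_ext_def by auto
  also have "\<dots> = ereal ((1 - t) * real_of_ereal (R a) + t * real_of_ereal (R b))"
    using fin[OF a] fin[OF b] by (metis plus_ereal.simps(1) times_ereal.simps(1))
  finally show "real_of_ereal (R ((1 - t) *\<^sub>R a + t *\<^sub>R b))
      \<le> (1 - t) * real_of_ereal (R a) + t * real_of_ereal (R b)"
    using fin[OF p] by (metis ereal_less_eq(3))
qed (rule convex_eff_dom[OF proper cvx])

lemma closed_sublevel_continuous_add_lsc:
  fixes R :: "'a::metric_space \<Rightarrow> ereal" and c :: "'a \<Rightarrow> real"
  assumes proper: "\<And>x. R x \<noteq> -\<infinity>" and lsc: "lsc_fun R" and closed_dom: "closed (eff_dom R)"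
    and c: "continuous_on (eff_dom R) c"
  shows "closed {x \<in> eff_dom R. c x + real_of_ereal (R x) \<le> t}"
proof (unfold closed_sequential_limits, intro allI impI, elim conjE)
  fix s l
  assume s: "\<forall>n. s n \<in> {x \<in> eff_dom R. c x + real_of_ereal (R x) \<le> t}" and l: "s \<longlonglongrightarrow> l"
  note fin = ereal_real_of_ereal_eff_dom[OF proper]
  have l_dom: "l \<in> eff_dom R" using Lim_in_closed_set[OF closed_dom _ _ l] s by auto
  show "l \<in> {x \<in> eff_dom R. c x + real_of_ereal (R x) \<le> t}"
  proof (rule ccontr)
    assume "\<not> ?thesis"
    with l_dom have gt: "c l + real_of_ereal (R l) > t" by auto
    define e where "e = (c l + real_of_ereal (R l) - t) / 2"
    have e: "e > 0" using gt by (simp add: e_def)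
    have "(\<lambda>n. c (s n)) \<longlonglongrightarrow> c l"
      by (rule continuous_on_tendsto_compose[OF c l l_dom]) (use s in auto)
    then have near: "eventually (\<lambda>n. dist (c (s n)) (c l) < e) sequentially"
      using e tendstoD by blast
    have "eventually (\<lambda>n. s n \<in> {x. R x \<le> ereal (t - c l + e)}) sequentially"
    proof (rule eventually_mono[OF near])
      fix n assume d: "dist (c (s n)) (c l) < e"
      have sn: "s n \<in> eff_dom R" "c (s n) + real_of_ereal (R (s n)) \<le> t" using s by auto
      then have "real_of_ereal (R (s n)) \<le> t - c l + e" using d by (simp add: dist_real_def abs_less_iff)
      then show "s n \<in> {x. R x \<le> ereal (t - c l + e)}" using fin[OF sn(1)] by (metis ereal_less_eq(3) mem_Collect_eq)
    qed
    moreover have "closed {x. R x \<le> ereal (t - c l + e)}" using lsc unfolding lsc_fun_def by auto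
    ultimately have "l \<in> {x. R x \<le> ereal (t - c l + e)}"
      using Lim_in_closed_set[OF _ _ trivial_limit_sequentially l] by blast
    then have "real_of_ereal (R l) \<le> t - c l + e" using fin[OF l_dom] by (metis ereal_less_eq(3) mem_Collect_eq)
    then show False using gt by (simp add: e_def field_simps)
  qed
qed

lemma compact_closed_sublevels_attains_inf:
  fixes \<phi> :: "'a::topological_space \<Rightarrow> real"
  assumes K: "compact K" "K \<noteq> {}" and closed_sublevels: "\<And>t. closed {x \<in> K. \<phi> x \<le> t}"
  shows "\<exists>x\<in>K. \<forall>x'\<in>K. \<phi> x \<le> \<phi> x'"
proof -
  have "K \<inter> (\<Inter>x'\<in>K. {x \<in> K. \<phi> x \<le> \<phi> x'}) \<noteq> {}"
  proof (rule compact_imp_fip_image[OF K(1) closed_sublevels])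
    fix I assume I: "finite I" "I \<subseteq> K"
    show "K \<inter> (\<Inter>x'\<in>I. {x \<in> K. \<phi> x \<le> \<phi> x'}) \<noteq> {}"
    proof (cases "I = {}")
      case True then show ?thesis using K by auto
    next
      case False
      have "Min (\<phi> ` I) \<in> \<phi> ` I" using I False by (intro Min_in) auto
      then obtain m where "m \<in> I" "\<phi> m = Min (\<phi> ` I)" by auto
      then have "m \<in> K \<inter> (\<Inter>x'\<in>I. {x \<in> K. \<phi> x \<le> \<phi> x'})" using I by auto
      then show ?thesis by blast
    qed
  qed
  then show ?thesis by blast
qed

lemma norm_convex_combination_squared:
  fixes a b :: "'a::real_inner"
  shows "(norm ((1 - t) *\<^sub>R a + t *\<^sub>R b))\<^sup>2
    = (1 - t) * (norm a)\<^sup>2 + t * (norm b)\<^sup>2 - t * (1 - t) * (norm (a - b))\<^sup>2"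
  by (simp only: power2_norm_eq_inner)
    (simp add: inner_add_left inner_add_right inner_diff_left inner_diff_right inner_commute
      algebra_simps power2_eq_square)

lemma prox_min_quadratic_growth:
  fixes \<phi> :: "'a::real_inner \<Rightarrow> real"
  assumes cvx: "convex_on K \<phi>" and m: "m \<in> K" and x: "x \<in> K"
    and min: "\<And>x'. x' \<in> K \<Longrightarrow> \<phi> m + \<mu> / 2 * (norm (m - y))\<^sup>2 \<le> \<phi> x' + \<mu> / 2 * (norm (x' - y))\<^sup>2"
  shows "\<phi> m + \<mu> / 2 * (norm (m - y))\<^sup>2 + \<mu> / 2 * (norm (x - m))\<^sup>2 \<le> \<phi> x + \<mu> / 2 * (norm (x - y))\<^sup>2"
proof -
  define \<Phi> where "\<Phi> x = \<phi> x + \<mu> / 2 * (norm (x - y))\<^sup>2" for x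
  define D where "D = (norm (x - m))\<^sup>2"
  \<comment> \<open>compare with the points \<open>(1 - t) m + t x\<close> of the segment and let \<open>t \<rightarrow> 0\<close>\<close>
  have "\<mu> / 2 * D \<le> \<Phi> x - \<Phi> m"
  proof (rule field_le_mult_one_interval)
    fix s :: real assume s: "0 < s" "s < 1"
    define t where "t = 1 - s"
    have t: "0 < t" "t < 1" using s by (auto simp: t_def)
    define p where "p = (1 - t) *\<^sub>R m + t *\<^sub>R x"
    have "p \<in> K" unfolding p_def using convex_on_imp_convex[OF cvx] m x t by (simp add: convex_alt)
    have conv: "\<phi> p \<le> (1 - t) * \<phi> m + t * \<phi> x"
      unfolding p_def using convex_onD[OF cvx, of t m x] t m x by auto
    have "p - y = (1 - t) *\<^sub>R (m - y) + t *\<^sub>R (x - y)" unfolding p_def by (simp add: algebra_simps)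
    then have sq: "(norm (p - y))\<^sup>2 = (1 - t) * (norm (m - y))\<^sup>2 + t * (norm (x - y))\<^sup>2 - t * (1 - t) * D"
      by (simp add: norm_convex_combination_squared D_def norm_minus_commute)
    have "\<mu> / 2 * (norm (p - y))\<^sup>2 = (1 - t) * (\<mu> / 2 * (norm (m - y))\<^sup>2)
        + t * (\<mu> / 2 * (norm (x - y))\<^sup>2) - \<mu> / 2 * (t * (1 - t) * D)"
      unfolding sq by (simp add: field_simps)
    then have "\<Phi> p \<le> (1 - t) * \<Phi> m + t * \<Phi> x - \<mu> / 2 * (t * (1 - t) * D)"
      using conv unfolding \<Phi>_def by (simp add: algebra_simps)
    moreover have "\<Phi> m \<le> \<Phi> p" using min[OF \<open>p \<in> K\<close>] by (simp add: \<Phi>_def)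
    ultimately have "\<Phi> m \<le> (1 - t) * \<Phi> m + t * \<Phi> x - \<mu> / 2 * (t * (1 - t) * D)" by linarith
    then have "t * (\<mu> / 2 * ((1 - t) * D)) \<le> t * (\<Phi> x - \<Phi> m)" by (simp add: field_simps)
    then have "\<mu> / 2 * ((1 - t) * D) \<le> \<Phi> x - \<Phi> m" using t by simp
    then show "s * (\<mu> / 2 * D) \<le> \<Phi> x - \<Phi> m" by (simp add: t_def algebra_simps)
  qed
  then show ?thesis unfolding \<Phi>_def D_def by simp
qed

lemma prox_argmin_quadratic_growth:
  fixes R :: "'a::real_inner \<Rightarrow> ereal" and h :: "'a \<Rightarrow> real" and y :: 'a
  assumes proper: "\<And>x. R x \<noteq> -\<infinity>" and lsc: "lsc_fun R" and cvx: "convex_ext R"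
    and dom: "compact (eff_dom R)" "eff_dom R \<noteq> {}"
    and h_cont: "continuous_on (eff_dom R) h" and h_convex: "convex_on (eff_dom R) h"
    and mu: "\<mu> > 0"
  defines "T \<equiv> THE x. \<forall>x'. ereal (h x) + R x + ereal (\<mu> / 2 * (norm (x - y))\<^sup>2)
                         \<le> ereal (h x') + R x' + ereal (\<mu> / 2 * (norm (x' - y))\<^sup>2)"
  shows "T \<in> eff_dom R \<and> (\<forall>x\<in>eff_dom R. h T + real_of_ereal (R T) + \<mu> / 2 * (norm (T - y))\<^sup>2
     + \<mu> / 2 * (norm (x - T))\<^sup>2 \<le> h x + real_of_ereal (R x) + \<mu> / 2 * (norm (x - y))\<^sup>2)"
proof -
  define K where "K = eff_dom R"
  define \<phi> where "\<phi> x = h x + real_of_ereal (R x)" for x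
  define \<Phi> where "\<Phi> x = \<phi> x + \<mu> / 2 * (norm (x - y))\<^sup>2" for x
  have objective: "ereal (h x) + R x + ereal (\<mu> / 2 * (norm (x - y))\<^sup>2)
      = (if x \<in> K then ereal (\<Phi> x) else \<infinity>)" for x
  proof (cases "x \<in> K")
    case True
    moreover obtain v where "R x = ereal v"
      using True proper[of x] by (cases "R x") (auto simp: K_def eff_dom_def)
    ultimately show ?thesis by (simp add: \<Phi>_def \<phi>_def)
  next
    case False
    then show ?thesis by (simp add: K_def eff_dom_def)
  qed
  have "closed {x \<in> K. \<Phi> x \<le> t}" for t
  proof -
    have "continuous_on K (\<lambda>x. h x + \<mu> / 2 * (norm (x - y))\<^sup>2)"
      unfolding K_def by (intro continuous_intros h_cont)
    from closed_sublevel_continuous_add_lsc[OF proper lsc compact_imp_closed[OF dom(1)] this[unfolded K_def]]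
    show ?thesis by (simp add: K_def \<Phi>_def \<phi>_def algebra_simps)
  qed
  then obtain m where m: "m \<in> K" "\<And>x. x \<in> K \<Longrightarrow> \<Phi> m \<le> \<Phi> x"
    using compact_closed_sublevels_attains_inf[of K \<Phi>] dom unfolding K_def by blast
  have "convex_on K \<phi>"
    unfolding K_def \<phi>_def by (intro convex_on_add h_convex convex_on_real_of_ereal_eff_dom proper cvx)
  then have growth: "\<Phi> m + \<mu> / 2 * (norm (x - m))\<^sup>2 \<le> \<Phi> x" if "x \<in> K" for x
    using prox_min_quadratic_growth[of K \<phi> m x] m that unfolding \<Phi>_def by blast
  have "T = m"
    unfolding T_def
  proof (rule the_equality)
    fix x
    assume "\<forall>x'. ereal (h x) + R x + ereal (\<mu> / 2 * (norm (x - y))\<^sup>2)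
                \<le> ereal (h x') + R x' + ereal (\<mu> / 2 * (norm (x' - y))\<^sup>2)"
    then have "(if x \<in> K then ereal (\<Phi> x) else \<infinity>) \<le> ereal (\<Phi> m)"
      using objective[of x] objective[of m] m(1) by metis
    then have "x \<in> K" "\<Phi> x \<le> \<Phi> m" by (auto split: if_splits)
    with growth have "\<mu> / 2 * (norm (x - m))\<^sup>2 \<le> 0" by fastforce
    then show "x = m" using mu by (simp add: mult_le_0_iff)
  qed (use m objective in auto)
  then show ?thesis using m growth unfolding K_def \<Phi>_def \<phi>_def by auto
qed

lemma abs_diff_le_gradient_bound:
  fixes F :: "'a::real_inner \<Rightarrow> real"
  assumes "convex K"
    and deriv: "\<And>x. x \<in> K \<Longrightarrow> (F has_derivative (\<lambda>v. G x \<bullet> v)) (at x within K)"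
    and bound: "\<And>x. x \<in> K \<Longrightarrow> norm (G x) \<le> L"
    and "a \<in> K" "b \<in> K"
  shows "\<bar>F a - F b\<bar> \<le> L * norm (a - b)"
proof -
  have "onorm (\<lambda>v. G x \<bullet> v) \<le> L" if "x \<in> K" for x
  proof (rule onorm_bound)
    show "0 \<le> L" using bound[OF that] norm_ge_zero order_trans by blast
    fix v
    have "norm (G x \<bullet> v) \<le> norm (G x) * norm v" by (simp add: Cauchy_Schwarz_ineq2)
    also have "\<dots> \<le> L * norm v" by (rule mult_right_mono[OF bound[OF that] norm_ge_zero])
    finally show "norm (G x \<bullet> v) \<le> L * norm v" .
  qed
  from differentiable_bound[OF assms(1) deriv this assms(4,5)] show ?thesis by simp
qed

lemma quadratic_growth_minimisers_dist:
  fixes F G :: "'a::real_normed_vector \<Rightarrow> real"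
  assumes a: "a \<in> K" and b: "b \<in> K"
    and growth_F: "\<And>x. x \<in> K \<Longrightarrow> F a + \<mu> / 2 * (norm (x - a))\<^sup>2 \<le> F x"
    and growth_G: "\<And>x. x \<in> K \<Longrightarrow> G b + \<mu> / 2 * (norm (x - b))\<^sup>2 \<le> G x"
    and lip: "\<And>x x'. x \<in> K \<Longrightarrow> x' \<in> K \<Longrightarrow> \<bar>(F x - G x) - (F x' - G x')\<bar> \<le> L * norm (x - x')"
    and L: "0 \<le> L"
  shows "\<mu> * norm (a - b) \<le> L"
proof -
  define d where "d = norm (a - b)"
  have "\<mu> * d\<^sup>2 \<le> (F b - G b) - (F a - G a)"
    using growth_F[OF b] growth_G[OF a] by (simp add: d_def norm_minus_commute)
  also have "\<dots> \<le> L * d"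
    using lip[OF b a] by (simp add: d_def norm_minus_commute)
  finally have "(\<mu> * d) * d \<le> L * d" by (simp add: power2_eq_square mult.assoc)
  then show ?thesis
    using L mult_right_le_imp_le[of "\<mu> * d" d L] by (cases "d = 0") (auto simp: d_def)
qed

lemma best_resp_lipschitz:
  fixes f :: "nat \<Rightarrow> 'a::real_inner \<Rightarrow> 'a \<Rightarrow> real" and g :: "nat \<Rightarrow> 'a \<Rightarrow> 'a \<Rightarrow> 'a"
  assumes mu: "\<mu> > 0"
    and proper: "\<And>x. r i x \<noteq> -\<infinity>" and lsc: "lsc_fun (r i)" and cvx: "convex_ext (r i)"
    and dom: "compact (eff_dom (r i))" and y: "y \<in> eff_dom (r i)"
    and deriv: "\<And>w x. x \<in> eff_dom (r i) \<Longrightarrow> ((\<lambda>x. f i x (x + w)) has_derivative (\<lambda>v. g i x w \<bullet> v)) (at x)"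
    and f_convex: "\<And>w. convex_on (eff_dom (r i)) (\<lambda>x. f i x (x + w))"
    and g_lip: "\<And>x w1 w2. x \<in> eff_dom (r i) \<Longrightarrow> norm (g i x w1 - g i x w2) \<le> L * norm (w1 - w2)"
  shows "\<mu> * norm (best_resp f r \<mu> i y z1 - best_resp f r \<mu> i y z2) \<le> L * norm (z1 - z2)"
proof -
  define K where "K = eff_dom (r i)"
  define \<Phi> where "\<Phi> w x = f i x (x + w) + real_of_ereal (r i x) + \<mu> / 2 * (norm (x - y))\<^sup>2" for w x
  define T where "T z = best_resp f r \<mu> i y z" for z
  have min: "T u \<in> K \<and> (\<forall>x\<in>K. \<Phi> (u - y) (T u) + \<mu> / 2 * (norm (x - T u))\<^sup>2 \<le> \<Phi> (u - y) x)" for u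
  proof -
    have "continuous_on K (\<lambda>x. f i x (x + (u - y)))"
      using deriv by (intro continuous_at_imp_continuous_on) (auto simp: K_def dest: has_derivative_continuous)
    from prox_argmin_quadratic_growth[OF proper lsc cvx dom _ this[unfolded K_def] f_convex mu, of y]
    show ?thesis using y unfolding T_def best_resp_def K_def \<Phi>_def by (auto simp: add_diff_eq)
  qed
  have "\<bar>(\<Phi> (z1 - y) x - \<Phi> (z2 - y) x) - (\<Phi> (z1 - y) x' - \<Phi> (z2 - y) x')\<bar>
      \<le> L * norm (z1 - z2) * norm (x - x')" if "x \<in> K" "x' \<in> K" for x x'
  proof -
    have diff_deriv: "((\<lambda>x. f i x (x + (z1 - y)) - f i x (x + (z2 - y)))
        has_derivative (\<lambda>v. (g i x (z1 - y) - g i x (z2 - y)) \<bullet> v)) (at x within K)" if "x \<in> K" for x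
      using has_derivative_diff[OF deriv deriv] that
      by (auto simp: K_def inner_diff_left intro: has_derivative_at_withinI)
    have diff_grad: "norm (g i x (z1 - y) - g i x (z2 - y)) \<le> L * norm (z1 - z2)" if "x \<in> K" for x
      using g_lip[of x "z1 - y" "z2 - y"] that by (simp add: K_def)
    from abs_diff_le_gradient_bound[OF convex_eff_dom[OF proper cvx, folded K_def] diff_deriv diff_grad that]
    show ?thesis unfolding \<Phi>_def by (simp add: algebra_simps)
  qed
  moreover have "0 \<le> L * norm (z1 - z2)"
  proof -
    have "norm (g i y (z1 - y) - g i y (z2 - y)) \<le> L * norm (z1 - z2)"
      using g_lip[OF y, of "z1 - y" "z2 - y"] by simp
    then show ?thesis using norm_ge_zero order_trans by blast
  qed
  ultimately show ?thesis
    using quadratic_growth_minimisers_dist[where K = K and F = "\<Phi> (z1 - y)" and G = "\<Phi> (z2 - y)"]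
      min[of z1] min[of z2] unfolding T_def by blast
qed

lemma inverse_le_Lt_factor:
  fixes a b :: real
  assumes a: "0 < a" and b: "0 \<le> b"
  shows "1 / a \<le> a / (a\<^sup>2 + b\<^sup>2) * inverse (1 - b / sqrt (a\<^sup>2 + b\<^sup>2))"
proof -
  define s where "s = sqrt (a\<^sup>2 + b\<^sup>2)"
  have s2: "s\<^sup>2 = a\<^sup>2 + b\<^sup>2" unfolding s_def by simp
  have "b < s" unfolding s_def using a by (intro real_less_rsqrt) simp
  then have s: "0 < s" "0 < s - b" using b by linarith+
  have "s * (s - b) = a\<^sup>2 + (b\<^sup>2 - s * b)" using s2 by (simp add: algebra_simps power2_eq_square)
  also have "\<dots> \<le> a\<^sup>2" using \<open>b < s\<close> b by (simp add: power2_eq_square mult_right_mono)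
  finally have "1 / a \<le> a / (s * (s - b))"
    using a s by (simp add: field_simps power2_eq_square)
  also have "\<dots> = a / s\<^sup>2 * (s / (s - b))"
    using s by (simp add: field_simps power2_eq_square)
  also have "\<dots> = a / (a\<^sup>2 + b\<^sup>2) * inverse (1 - b / s)"
    using s by (simp add: s2 field_simps)
  finally show ?thesis by (simp add: s_def)
qed

theorem lemma9:
  fixes n :: nat
    and f :: "nat \<Rightarrow> 'a::euclidean_space \<Rightarrow> 'a \<Rightarrow> real"
    and r :: "nat \<Rightarrow> 'a \<Rightarrow> ereal"
    and g :: "nat \<Rightarrow> 'a \<Rightarrow> 'a \<Rightarrow> 'a"
    and La \<mu> :: real
    and Lg :: "nat \<Rightarrow> real"
  assumes mu_pos: "\<mu> > 0"
    and La_pos: "La > 0"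
    \<comment> \<open>(i)\<close>
    and r_proper: "\<And>i x. i \<in> {1..n} \<Longrightarrow> r i x \<noteq> -\<infinity>"
    and r_lsc: "\<And>i. i \<in> {1..n} \<Longrightarrow> lsc_fun (r i)"
    and r_convex: "\<And>i. i \<in> {1..n} \<Longrightarrow> convex_ext (r i)"
    and r_dom: "\<And>i. i \<in> {1..n} \<Longrightarrow> compact (eff_dom (r i))"
    \<comment> \<open>(ii) with g the gradient: C^2 on an open neighbourhood of R_i, and convex on R_i\<close>
    and f_C2: "\<And>i y. i \<in> {1..n} \<Longrightarrow>
       \<exists>U H. open U \<and> eff_dom (r i) \<subseteq> U \<and>
         (\<forall>x\<in>U. ((\<lambda>x. f i x (x + y)) has_derivative (\<lambda>h. g i x y \<bullet> h)) (at x)) \<and>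
         (\<forall>x\<in>U. ((\<lambda>x. g i x y) has_derivative blinfun_apply (H x)) (at x)) \<and>
         continuous_on U (H :: 'a \<Rightarrow> 'a \<Rightarrow>\<^sub>L 'a)"
    and f_convex: "\<And>i y. i \<in> {1..n} \<Longrightarrow> convex_on (eff_dom (r i)) (\<lambda>x. f i x (x + y))"
    \<comment> \<open>(iii)\<close>
    and g_lip_x: "\<And>i y x x'. i \<in> {1..n} \<Longrightarrow> x \<in> eff_dom (r i) \<Longrightarrow> x' \<in> eff_dom (r i) \<Longrightarrow>
       norm (g i x y - g i x' y) \<le> La * norm (x - x')"
    \<comment> \<open>(iv)\<close>
    and g_lip_y: "\<And>i x y1 y2. i \<in> {1..n} \<Longrightarrow> x \<in> eff_dom (r i) \<Longrightarrow>
       norm (g i x y1 - g i x y2) \<le> Lg i * norm (y1 - y2)"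
    and i: "i \<in> {1..n}"
    and y: "y \<in> eff_dom (r i)"
  shows "norm (best_resp f r \<mu> i y z1 - best_resp f r \<mu> i y z2)
     \<le> (\<mu> * Max (Lg ` {1..n}) / (\<mu>\<^sup>2 + La\<^sup>2)
         * inverse (1 - La / sqrt (\<mu>\<^sup>2 + La\<^sup>2))) * norm (z1 - z2)"
proof -
  let ?T = "best_resp f r \<mu> i y"
  define M where "M = Max (Lg ` {1..n})"
  have Lg_le_M: "Lg i \<le> M" unfolding M_def using i by (intro Max_ge) auto
  have deriv: "((\<lambda>x. f i x (x + w)) has_derivative (\<lambda>v. g i x w \<bullet> v)) (at x)"
    if "x \<in> eff_dom (r i)" for w x
    using f_C2[OF i, of w] that by blast
  have "\<mu> * norm (?T z1 - ?T z2) \<le> Lg i * norm (z1 - z2)"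
    by (rule best_resp_lipschitz[where f = f and g = g and r = r and i = i,
          OF mu_pos r_proper[OF i] r_lsc[OF i] r_convex[OF i] r_dom[OF i] y deriv
             f_convex[OF i] g_lip_y[OF i]])
  then have "norm (?T z1 - ?T z2) \<le> Lg i * norm (z1 - z2) * (1 / \<mu>)"
    using mu_pos by (simp add: field_simps)
  also have "\<dots> \<le> M * norm (z1 - z2) * (1 / \<mu>)"
    using Lg_le_M mu_pos by (intro mult_right_mono) auto
  also have "\<dots> \<le> M * norm (z1 - z2) * (\<mu> / (\<mu>\<^sup>2 + La\<^sup>2) * inverse (1 - La / sqrt (\<mu>\<^sup>2 + La\<^sup>2)))"
  proof (rule mult_left_mono[OF inverse_le_Lt_factor[OF mu_pos less_imp_le[OF La_pos]]])
    obtain v :: 'a where "v \<in> Basis" using nonempty_Basis by blast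
    then have "norm (g i y v - g i y 0) \<le> Lg i" using g_lip_y[OF i y, of v 0] by (simp add: norm_Basis)
    then have "0 \<le> Lg i" using norm_ge_zero order_trans by blast
    then show "0 \<le> M * norm (z1 - z2)" using Lg_le_M by simp
  qed
  finally show ?thesis by (simp add: M_def mult_ac)
qed

end
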